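(* Let $X$ be an infinite-dimensional complex Banach space, $T \in \mathcal{B}(X)$, and $N \in \mathcal{B}(X)$ a nilpotent operator commuting with $T$. Then $\Pi_{a}(T+N)=\Pi_{a}(T)$.
   Context: $\mathcal{B}(X)$ is the algebra of bounded linear operators on $X$. $\sigma_a(T)$ is the approximate point spectrum of $T$. For $A\in\mathcal{B}(X)$, $asc(A)=\inf\{n\in\mathbb{N}:\mathcal{N}(A^n)=\mathcal{N}(A^{n+1})\}$ (infimum of empty set is $\infty$); $A$ is left Drazin invertible if $asc(A)<\infty$ and $\mathcal{R}(A^{asc(A)+1})$ is closed. A left pole of $T$ is a $\lambda\in\sigma_a(T)$ such that $T-\lambda I$ is left Drazin invertible; $\Pi_a(T)$ is the set of left poles of $T$. *)

theory Defs
  imports "HOL-Analysis.Analysis"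
begin

text \<open>A complex Banach space is modelled as a real Banach space 'a together with a
  complex scalar multiplication sc extending the real one, satisfying the
  vector-space axioms and the norm axiom norm (sc a x) = cmod a * norm x.\<close>

definition complex_scalar :: "(complex \<Rightarrow> 'a::real_normed_vector \<Rightarrow> 'a) \<Rightarrow> bool" where
  "complex_scalar sc \<longleftrightarrow>
     (\<forall>r x. sc (complex_of_real r) x = r *\<^sub>R x) \<and>
     (\<forall>a b x. sc (a * b) x = sc a (sc b x)) \<and>
     (\<forall>a b x. sc (a + b) x = sc a x + sc b x) \<and>
     (\<forall>a x y. sc a (x + y) = sc a x + sc a y) \<and>
     (\<forall>a x. norm (sc a x) = cmod a * norm x)"

definition bounded_op :: "(complex \<Rightarrow> 'a::real_normed_vector \<Rightarrow> 'a) \<Rightarrow> ('a \<Rightarrow> 'a) \<Rightarrow> bool" where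
  "bounded_op sc T \<longleftrightarrow> bounded_linear T \<and> (\<forall>a x. T (sc a x) = sc a (T x))"

definition infinite_dimensional :: "'a::real_vector itself \<Rightarrow> bool" where
  "infinite_dimensional _ \<longleftrightarrow> \<not> (\<exists>S::'a set. finite S \<and> span S = UNIV)"

definition nilpotent_op :: "('a \<Rightarrow> 'a::zero) \<Rightarrow> bool" where
  "nilpotent_op N \<longleftrightarrow> (\<exists>n. N ^^ n = (\<lambda>x. 0))"

definition bounded_below :: "('a::real_normed_vector \<Rightarrow> 'a) \<Rightarrow> bool" where
  "bounded_below A \<longleftrightarrow> (\<exists>c>0. \<forall>x. c * norm x \<le> norm (A x))"

definition approx_point_spectrum ::
  "(complex \<Rightarrow> 'a::real_normed_vector \<Rightarrow> 'a) \<Rightarrow> ('a \<Rightarrow> 'a) \<Rightarrow> complex set" where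
  "approx_point_spectrum sc T = {l. \<not> bounded_below (\<lambda>x. T x - sc l x)}"

definition ascent :: "('a \<Rightarrow> 'a::zero) \<Rightarrow> enat" where
  "ascent A = (if \<exists>n. (A ^^ n) -` {0} = (A ^^ Suc n) -` {0}
               then enat (LEAST n. (A ^^ n) -` {0} = (A ^^ Suc n) -` {0}) else \<infinity>)"

definition left_drazin_invertible :: "('a \<Rightarrow> 'a::{zero,topological_space}) \<Rightarrow> bool" where
  "left_drazin_invertible A \<longleftrightarrow>
     ascent A < \<infinity> \<and> closed (range (A ^^ (the_enat (ascent A) + 1)))"

definition left_poles ::
  "(complex \<Rightarrow> 'a::real_normed_vector \<Rightarrow> 'a) \<Rightarrow> ('a \<Rightarrow> 'a) \<Rightarrow> complex set" where
  "left_poles sc T = {l \<in> approx_point_spectrum sc T.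
                        left_drazin_invertible (\<lambda>x. T x - sc l x)}"

end

theory Submission
  imports Defs
begin

text \<open>Fix \<lambda> and put A = T - \<lambda>I, which commutes with N. Both conditions defining a left
  pole are stable under adding a commuting nilpotent operator; as A = (A + N) + (-N), it
  suffices to show that they pass from A to A + N.

  If A is bounded below, c \<parallel>N^j x\<parallel> \<le> \<parallel>A N^j x\<parallel> = \<parallel>N^j (A + N) x - N^(j+1) x\<parallel> bounds
  \<parallel>N^j x\<parallel> by a multiple of \<parallel>(A + N) x\<parallel>, by downward induction on j starting from N^m = 0.

  For an operator of finite ascent d, the open mapping theorem shows that R(A^(d+1)) is closed
  iff A is bounded below modulo its generalised kernel K = N(A^d), i.e. iff
  dist(A x, K) \<ge> c dist(x, K). The generalised kernels of A and A + N coincide (expand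
  (A + N)^(k+m) binomially), so A + N has finite ascent as well, and the argument above, with
  the distance to the N-invariant subspace K in place of the norm, shows that A + N is bounded
  below modulo K.\<close>

lemma linear_funpow:
  fixes f :: "'a::real_vector \<Rightarrow> 'a"
  shows "linear f \<Longrightarrow> linear (f ^^ n)"
  by (induction n) (simp_all add: real_vector.linear_id linear_compose)

lemma bounded_linear_funpow:
  fixes f :: "'a::real_normed_vector \<Rightarrow> 'a"
  shows "bounded_linear f \<Longrightarrow> bounded_linear (f ^^ n)"
  by (induction n) (simp_all add: id_def o_def bounded_linear_compose)

lemma commute_funpow:
  assumes "\<And>x. f (g x) = g (f x)"
  shows "f ((g ^^ n) x) = (g ^^ n) (f x)"
  by (induction n arbitrary: x) (simp_all add: assms)

lemma funpow_uminus:
  fixes f :: "'a::real_vector \<Rightarrow> 'a"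
  assumes "linear f"
  shows "((\<lambda>x. - f x) ^^ n) x = (-1) ^ n *\<^sub>R (f ^^ n) x"
  by (induction n) (simp_all add: linear_scale[OF assms])

lemma nilpotent_op_uminus:
  fixes N :: "'a::real_vector \<Rightarrow> 'a"
  assumes "linear N" "nilpotent_op N"
  shows "nilpotent_op (\<lambda>x. - N x)"
  using assms by (auto simp: nilpotent_op_def funpow_uminus fun_eq_iff)

lemma funpow_eq_0_mono:
  fixes A :: "'a::real_vector \<Rightarrow> 'a"
  assumes "linear A" "(A ^^ n) x = 0" "n \<le> k"
  shows "(A ^^ k) x = 0"
proof -
  have "(A ^^ k) x = (A ^^ (k - n)) ((A ^^ n) x)"
    using assms(3) by (metis funpow_add comp_apply le_add_diff_inverse2)
  with assms(2) show ?thesis by (simp add: linear_0[OF linear_funpow[OF assms(1)]])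
qed

section \<open>Distance to a subspace\<close>

lemma infdist_greatest:
  assumes "K \<noteq> {}" "\<And>k. k \<in> K \<Longrightarrow> a \<le> dist x k"
  shows "a \<le> infdist x K"
  using assms by (simp add: infdist_notempty cINF_greatest)

lemma infdist_lessE:
  assumes "infdist x K < r" "K \<noteq> {}"
  obtains k where "k \<in> K" "dist x k < r"
  using assms infdist_greatest[of K r x] by force

lemma infdist_subspace_add_le:
  fixes K :: "'a::real_normed_vector set"
  assumes "subspace K"
  shows "infdist (x + y) K \<le> infdist x K + infdist y K"
proof -
  have K: "K \<noteq> {}" using subspace_0[OF assms] by blast
  have "infdist (x + y) K - infdist x K \<le> dist y k'" if "k' \<in> K" for k'
  proof -
    have "infdist (x + y) K - dist y k' \<le> dist x k" if "k \<in> K" for k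
    proof -
      have "infdist (x + y) K \<le> dist (x + y) (k + k')"
        by (rule infdist_le) (use subspace_add[OF assms] \<open>k \<in> K\<close> \<open>k' \<in> K\<close> in blast)
      also have "\<dots> \<le> dist x k + dist y k'"
        using norm_diff_triangle_ineq[of x y k k'] by (simp add: dist_norm)
      finally show ?thesis by simp
    qed
    then have "infdist (x + y) K - dist y k' \<le> infdist x K"
      by (intro infdist_greatest[OF K]) auto
    then show ?thesis by simp
  qed
  then have "infdist (x + y) K - infdist x K \<le> infdist y K"
    by (intro infdist_greatest[OF K]) auto
  then show ?thesis by simp
qed

lemma infdist_subspace_uminus:
  fixes K :: "'a::real_normed_vector set"
  assumes "subspace K"
  shows "infdist (- x) K = infdist x K"
proof -
  have le: "infdist (- z) K \<le> infdist z K" for z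
  proof (rule infdist_greatest)
    show "K \<noteq> {}" using subspace_0[OF assms] by blast
    fix k assume "k \<in> K"
    then have "infdist (- z) K \<le> dist (- z) (- k)" by (intro infdist_le subspace_neg[OF assms])
    then show "infdist (- z) K \<le> dist z k" by (simp add: dist_minus)
  qed
  show ?thesis using le[of x] le[of "- x"] by simp
qed

lemma infdist_subspace_diff_le:
  fixes K :: "'a::real_normed_vector set"
  assumes "subspace K"
  shows "infdist (x - y) K \<le> infdist x K + infdist y K"
  using infdist_subspace_add_le[OF assms, of x "- y"] by (simp add: infdist_subspace_uminus[OF assms])

lemma infdist_subspace_linear_le:
  fixes L :: "'a::real_normed_vector \<Rightarrow> 'a"
  assumes "subspace K" "bounded_linear L" "L ` K \<subseteq> K"
  obtains M where "M > 0" "\<And>x. infdist (L x) K \<le> M * infdist x K"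
proof -
  obtain M where M: "M > 0" "\<And>x. norm (L x) \<le> norm x * M"
    using bounded_linear.pos_bounded[OF assms(2)] by blast
  have "infdist (L x) K \<le> M * infdist x K" for x
  proof -
    have "infdist (L x) K / M \<le> infdist x K"
    proof (rule infdist_greatest)
      show "K \<noteq> {}" using subspace_0[OF assms(1)] by blast
      fix k assume "k \<in> K"
      then have "infdist (L x) K \<le> dist (L x) (L k)" using assms(3) by (intro infdist_le) blast
      also have "\<dots> \<le> dist x k * M"
        using M(2)[of "x - k"] by (simp add: dist_norm linear_diff[OF bounded_linear.linear[OF assms(2)]])
      finally show "infdist (L x) K / M \<le> dist x k" using M(1) by (simp add: field_simps)
    qed
    then show ?thesis using M(1) by (simp add: field_simps)
  qed
  with M(1) that show ?thesis by blast
qed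

lemma infdist_funpow_le:
  assumes "M \<ge> 0" "\<And>x. infdist (L x) K \<le> M * infdist x K"
  shows "infdist ((L ^^ n) x) K \<le> M ^ n * infdist x K"
proof (induction n)
  case (Suc n)
  have "infdist ((L ^^ Suc n) x) K \<le> M * infdist ((L ^^ n) x) K" using assms(2) by simp
  also have "\<dots> \<le> M ^ Suc n * infdist x K"
    using mult_left_mono[OF Suc assms(1)] by (simp add: mult.assoc)
  finally show ?case .
qed simp

lemma infdist_funpow_ge:
  assumes "c > 0" "\<And>x. c * infdist x K \<le> infdist (A x) K"
  shows "c ^ n * infdist x K \<le> infdist ((A ^^ n) x) K"
proof (induction n)
  case (Suc n)
  have "c ^ Suc n * infdist x K \<le> c * infdist ((A ^^ n) x) K"
    using Suc assms(1) by (simp add: mult_left_mono)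
  also have "\<dots> \<le> infdist ((A ^^ Suc n) x) K" using assms(2) by simp
  finally show ?case .
qed simp

text \<open>A induces a bounded below operator on the quotient X/K; for K = {0} this is
  bounded belowness of A itself.\<close>
definition bounded_below_mod :: "'a::real_normed_vector set \<Rightarrow> ('a \<Rightarrow> 'a) \<Rightarrow> bool" where
  "bounded_below_mod K A \<longleftrightarrow> (\<exists>c>0. \<forall>x. c * infdist x K \<le> infdist (A x) K)"

lemma bounded_below_iff_bounded_below_mod_0: "bounded_below A \<longleftrightarrow> bounded_below_mod {0} A"
  by (simp add: bounded_below_def bounded_below_mod_def)

lemma bounded_below_mod_add_commuting_nilpotent:
  fixes A N :: "'a::real_normed_vector \<Rightarrow> 'a"
  assumes K: "subspace K" and N: "bounded_linear N" "N ` K \<subseteq> K" "nilpotent_op N"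
    and comm: "\<And>x. A (N x) = N (A x)" and A: "bounded_below_mod K A"
  shows "bounded_below_mod K (\<lambda>x. A x + N x)"
proof -
  let ?q = "\<lambda>x. infdist x K" and ?B = "\<lambda>x. A x + N x"
  obtain c where c: "c > 0" "\<And>x. c * ?q x \<le> ?q (A x)"
    using A by (auto simp: bounded_below_mod_def)
  obtain M where M: "M > 0" "\<And>x. ?q (N x) \<le> M * ?q x"
    using infdist_subspace_linear_le[OF K N(1,2)] by blast
  obtain m where m: "N ^^ m = (\<lambda>x. 0)" using N(3) by (auto simp: nilpotent_op_def)
  have step: "c * ?q ((N ^^ j) x) \<le> M ^ j * ?q (?B x) + ?q ((N ^^ Suc j) x)" for j x
  proof -
    have "(N ^^ j) (A x) = (N ^^ j) (?B x) - (N ^^ Suc j) x"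
      using linear_diff[OF linear_funpow[OF bounded_linear.linear[OF N(1)]], of j "?B x" "N x"]
      by (simp add: funpow_swap1)
    then have "?q (A ((N ^^ j) x)) \<le> ?q ((N ^^ j) (?B x)) + ?q ((N ^^ Suc j) x)"
      by (simp add: commute_funpow[of A N, OF comm] infdist_subspace_diff_le[OF K])
    then show ?thesis using c(2)[of "(N ^^ j) x"] infdist_funpow_le[OF less_imp_le[OF M(1)] M(2), of j "?B x"] by linarith
  qed
  have "\<exists>D\<ge>0. \<forall>x. ?q ((N ^^ (m - i)) x) \<le> D * ?q (?B x)" if "i \<le> m" for i
    using that
  proof (induction i)
    case 0
    show ?case using m K by (intro exI[of _ 0]) (simp add: subspace_0)
  next
    case (Suc i)
    then obtain D where D: "D \<ge> 0" "\<And>x. ?q ((N ^^ (m - i)) x) \<le> D * ?q (?B x)" by auto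
    have m_i: "m - i = Suc (m - Suc i)" using Suc.prems by simp
    have "?q ((N ^^ (m - Suc i)) x) \<le> (M ^ (m - Suc i) + D) / c * ?q (?B x)" for x
      using step[of "m - Suc i" x] D(2)[of x] c(1) unfolding m_i
      by (simp add: field_simps)
    then show ?case using D(1) M(1) c(1) by (intro exI[of _ "(M ^ (m - Suc i) + D) / c"]) simp
  qed
  then obtain D where D: "D \<ge> 0" "\<And>x. ?q x \<le> D * ?q (?B x)" by fastforce
  have "1 / (D + 1) * ?q x \<le> ?q (?B x)" for x
  proof -
    have "?q x \<le> (D + 1) * ?q (?B x)"
      using D(2)[of x] infdist_nonneg[of "?B x" K] by (simp add: distrib_right)
    then show ?thesis using D(1) by (simp add: field_simps)
  qed
  then show ?thesis using D(1) by (auto simp: bounded_below_mod_def intro!: exI[of _ "1 / (D + 1)"])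
qed

section \<open>Operators with closed range\<close>

lemma bounded_linear_suminf_geometric:
  fixes S :: "'a::banach \<Rightarrow> 'b::real_normed_vector"
  assumes S: "bounded_linear S" and x: "\<And>n. norm (x n) \<le> B * (1/2) ^ n"
    and sums: "(\<lambda>n. S (x n)) sums y"
  shows "S (suminf x) = y" "norm (suminf x) \<le> 2 * B"
proof -
  have geometric: "summable (\<lambda>n. B * (1/2::real) ^ n)"
    by (intro summable_mult summable_geometric) simp
  have summable_norm_x: "summable (\<lambda>n. norm (x n))"
    by (rule summable_comparison_test'[OF geometric]) (simp add: x)
  have "(\<lambda>n. S (x n)) sums S (suminf x)"
    using summable_norm_cancel[OF summable_norm_x] by (intro bounded_linear.sums[OF S] summable_sums)
  with sums show "S (suminf x) = y" by (simp add: sums_unique2)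
  have "norm (suminf x) \<le> (\<Sum>n. norm (x n))" by (rule summable_norm[OF summable_norm_x])
  also have "\<dots> \<le> (\<Sum>n. B * (1/2::real) ^ n)" by (intro suminf_le summable_norm_x geometric x)
  also have "\<dots> = 2 * B" by (simp add: suminf_mult suminf_geometric)
  finally show "norm (suminf x) \<le> 2 * B" .
qed

text \<open>Successive approximation: each step lifts the current residual up to half its size.\<close>
lemma lifting_of_approximate_lifting:
  fixes S :: "'a::banach \<Rightarrow> 'b::real_normed_vector"
  assumes S: "bounded_linear S" and Y: "\<And>r x. r \<in> Y \<Longrightarrow> r - S x \<in> Y" and "C \<ge> 0"
    and approx: "\<And>y e. y \<in> Y \<Longrightarrow> e > 0 \<Longrightarrow> \<exists>x. norm x \<le> C * norm y \<and> norm (y - S x) < e"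
    and "y \<in> Y"
  obtains x where "S x = y" "norm x \<le> 2 * C * norm y"
proof (cases "y = 0")
  case True
  then show ?thesis using that[of 0] linear_0[OF bounded_linear.linear[OF S]] by simp
next
  case False
  define P where "P n r x \<longleftrightarrow> norm x \<le> C * norm r \<and> norm (r - S x) < norm y / 2 ^ Suc n" for n r x
  have "\<forall>n. \<forall>r\<in>Y. \<exists>x. P n r x"
    unfolding P_def using approx False by simp
  then obtain f where f: "\<And>n r. r \<in> Y \<Longrightarrow> P n r (f n r)" by metis
  define r where "r = rec_nat y (\<lambda>n rn. rn - S (f n rn))"
  have r_0: "r 0 = y" and r_Suc: "r (Suc n) = r n - S (f n (r n))" for n
    by (simp_all add: r_def)
  have r_Y: "r n \<in> Y" for n
    by (induction n) (simp_all add: r_0 r_Suc \<open>y \<in> Y\<close> Y)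
  have r_bound: "norm (r n) \<le> norm y * (1/2) ^ n" for n
  proof (cases n)
    case (Suc k)
    then show ?thesis using f[OF r_Y[of k], of k] by (simp add: r_Suc P_def power_divide)
  qed (simp add: r_0)
  define x where "x n = f n (r n)" for n
  have x_bound: "norm (x n) \<le> C * norm y * (1/2) ^ n" for n
    using f[OF r_Y[of n], of n] mult_left_mono[OF r_bound[of n] \<open>C \<ge> 0\<close>]
    by (simp add: x_def P_def)
  have partial_sums: "(\<Sum>k<n. S (x k)) = y - r n" for n
    by (induction n) (simp_all add: r_0 r_Suc x_def)
  have "r \<longlonglongrightarrow> 0"
    by (rule Lim_null_comparison[where g = "\<lambda>n. norm y * (1/2) ^ n"])
      (simp_all add: r_bound tendsto_mult_right_zero LIMSEQ_power_zero)
  then have "(\<lambda>n. S (x n)) sums y"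
    unfolding sums_def partial_sums using tendsto_diff[OF tendsto_const] by force
  from bounded_linear_suminf_geometric[OF S x_bound this] show ?thesis
    by (intro that) (simp_all add: mult.assoc)
qed

lemma closed_range_of_bounded_lifting:
  fixes S :: "'a::banach \<Rightarrow> 'b::real_normed_vector"
  assumes S: "bounded_linear S" and "C \<ge> 0"
    and lifting: "\<And>x. \<exists>x'. S x' = S x \<and> norm x' \<le> C * norm (S x)"
  shows "closed (range S)"
proof -
  have lin: "linear S" using S by (rule bounded_linear.linear)
  have closure_diff: "r - S x \<in> closure (range S)" if "r \<in> closure (range S)" for r x
  proof -
    have "(\<lambda>y. y - S x) ` range S \<subseteq> closure (range S)"
      by (auto simp flip: linear_diff[OF lin] intro: closure_subset[THEN subsetD])
    then have "(\<lambda>y. y - S x) ` closure (range S) \<subseteq> closure (range S)"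
      by (intro image_closure_subset continuous_intros) simp
    then show ?thesis using that by blast
  qed
  have approx: "\<exists>x. norm x \<le> 2 * C * norm y \<and> norm (y - S x) < e"
    if y: "y \<in> closure (range S)" and "e > 0" for y e
  proof (cases "y = 0")
    case True
    then show ?thesis using \<open>e > 0\<close> by (intro exI[of _ 0]) (simp add: linear_0[OF lin])
  next
    case False
    then have "min e (norm y) > 0" using \<open>e > 0\<close> by simp
    then obtain w where w: "dist (S w) y < min e (norm y)"
      using y unfolding closure_approachable by blast
    obtain x where x: "S x = S w" "norm x \<le> C * norm (S w)" using lifting by blast
    have "norm (S w) \<le> 2 * norm y"
      using w norm_triangle_sub[of "S w" y] by (simp add: dist_norm)
    then have "norm x \<le> 2 * C * norm y"
      using x mult_left_mono[OF _ \<open>C \<ge> 0\<close>] by fastforce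
    moreover have "norm (y - S x) < e" using x w by (simp add: dist_norm norm_minus_commute)
    ultimately show ?thesis by blast
  qed
  have "closure (range S) \<subseteq> range S"
  proof
    fix y assume "y \<in> closure (range S)"
    with lifting_of_approximate_lifting[OF S closure_diff _ approx] \<open>C \<ge> 0\<close>
    show "y \<in> range S" by (metis mult_nonneg_nonneg rangeI zero_le_numeral)
  qed
  then show ?thesis by (simp add: closure_subset_eq)
qed

lemma closed_range_Baire:
  fixes S :: "'a::real_normed_vector \<Rightarrow> 'b::banach"
  assumes "closed (range S)"
  obtains R r y0 where "R \<ge> 0" "r > 0" "y0 \<in> range S"
    "\<And>y. y \<in> range S \<Longrightarrow> dist y0 y < r \<Longrightarrow> y \<in> closure (S ` cball 0 R)"
proof -
  let ?Y = "range S" and ?T = "\<lambda>n::nat. closure (S ` cball 0 (real n))"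
  have "closedin euclidean ?Y" using assms by (simp only: closed_closedin)
  then have complete: "completely_metrizable_space (top_of_set ?Y)"
    by (rule completely_metrizable_space_closedin[OF completely_metrizable_space_euclidean])
  have T_Y: "?T n \<subseteq> ?Y" for n
    by (rule closure_minimal) (auto simp: assms)
  have T_closed: "closedin (top_of_set ?Y) (?T n)" for n
    by (rule closed_subset[OF T_Y]) simp
  have T_cover: "\<Union>(range ?T) = ?Y"
  proof (intro antisym subsetI)
    fix y assume "y \<in> ?Y"
    then obtain x where x: "y = S x" by blast
    have "x \<in> cball 0 (real (nat \<lceil>norm x\<rceil>))"
      using real_nat_ceiling_ge[of "norm x"] by simp
    then have "y \<in> ?T (nat \<lceil>norm x\<rceil>)"
      unfolding x by (rule closure_subset[THEN subsetD, OF imageI])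
    then show "y \<in> \<Union>(range ?T)" by blast
  qed (use T_Y in blast)
  have "\<exists>n. top_of_set ?Y interior_of ?T n \<noteq> {}"
  proof (rule ccontr)
    assume "\<not> ?thesis"
    then have "top_of_set ?Y interior_of \<Union>(range ?T) = {}"
      using complete T_closed by (intro Baire_category_alt) blast+
    then show False
      using T_cover interior_of_topspace[of "top_of_set ?Y"] by simp
  qed
  then obtain n y0 U where U: "openin (top_of_set ?Y) U" "y0 \<in> U" "U \<subseteq> ?T n"
    by (auto simp: interior_of_def)
  then obtain V where V: "open V" "U = ?Y \<inter> V" by (auto simp: openin_open)
  then obtain r where r: "r > 0" "ball y0 r \<subseteq> V" using U(2) open_contains_ball by blast
  show ?thesis
  proof (rule that[of "real n" r y0])
    show "y0 \<in> ?Y" using U(2) V(2) by blast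
    fix y assume "y \<in> ?Y" "dist y0 y < r"
    then have "y \<in> U" using r(2) V(2) by auto
    then show "y \<in> ?T n" using U(3) by blast
  qed (use r in simp_all)
qed

text \<open>Differences of points near y0 in the closure of S(B(0, R)) cover a ball around 0 in the
  range; rescaling gives the approximate lifting.\<close>
lemma approximate_lifting_of_closed_range:
  fixes S :: "'a::real_normed_vector \<Rightarrow> 'b::banach"
  assumes S: "bounded_linear S" and "closed (range S)"
  obtains C where "C \<ge> 0"
    "\<And>y e. y \<in> range S \<Longrightarrow> e > 0 \<Longrightarrow> \<exists>x. norm x \<le> C * norm y \<and> norm (y - S x) < e"
proof -
  have lin: "linear S" using S by (rule bounded_linear.linear)
  obtain R r y0 where R: "R \<ge> 0" "r > 0" "y0 \<in> range S"
    and near_y0: "\<And>y. y \<in> range S \<Longrightarrow> dist y0 y < r \<Longrightarrow> y \<in> closure (S ` cball 0 R)"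
    using closed_range_Baire[OF assms(2)] by blast
  have "\<exists>x. norm x \<le> 4 * R / r * norm y \<and> norm (y - S x) < e"
    if y: "y \<in> range S" and "e > 0" for y e
  proof (cases "y = 0")
    case True
    then show ?thesis using \<open>e > 0\<close> by (intro exI[of _ 0]) (simp add: linear_0[OF lin])
  next
    case False
    define t where "t = r / (2 * norm y)"
    have "t > 0" using False R(2) by (simp add: t_def)
    have "y0 + t *\<^sub>R y \<in> range S"
      using y R(3) by (auto simp flip: linear_add[OF lin] linear_scale[OF lin])
    moreover have "dist y0 (y0 + t *\<^sub>R y) < r"
      using False R(2) by (simp add: dist_norm t_def)
    ultimately have "y0 + t *\<^sub>R y \<in> closure (S ` cball 0 R)" by (rule near_y0)
    moreover have "e * t / 2 > 0" using \<open>e > 0\<close> \<open>t > 0\<close> by simp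
    ultimately obtain x1 where x1: "x1 \<in> cball 0 R" "dist (S x1) (y0 + t *\<^sub>R y) < e * t / 2"
      unfolding closure_approachable by blast
    have "y0 \<in> closure (S ` cball 0 R)" using near_y0[OF R(3)] R(2) by simp
    with \<open>e * t / 2 > 0\<close> obtain x2 where x2: "x2 \<in> cball 0 R" "dist (S x2) y0 < e * t / 2"
      unfolding closure_approachable by blast
    define x where "x = (1 / t) *\<^sub>R (x1 - x2)"
    have "norm x \<le> 2 * R / t"
      using norm_triangle_ineq4[of x1 x2] x1(1) x2(1) \<open>t > 0\<close> by (simp add: x_def divide_right_mono)
    also have "\<dots> = 4 * R / r * norm y" using False R(2) by (simp add: t_def field_simps)
    finally have x_norm: "norm x \<le> 4 * R / r * norm y" .
    define u v where "u = y0 + t *\<^sub>R y - S x1" and "v = y0 - S x2"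
    have "y - S x = (1 / t) *\<^sub>R (u - v)"
      using \<open>t > 0\<close> by (simp add: u_def v_def x_def linear_scale[OF lin] linear_diff[OF lin] algebra_simps)
    then have "norm (y - S x) \<le> (norm u + norm v) / t"
      using \<open>t > 0\<close> norm_triangle_ineq4[of u v] by (simp add: divide_right_mono)
    also have "\<dots> < e"
      using x1(2) x2(2) \<open>t > 0\<close> by (simp add: u_def v_def dist_norm norm_minus_commute field_simps)
    finally show ?thesis using x_norm by blast
  qed
  then show ?thesis using R by (intro that[of "4 * R / r"]) auto
qed

lemma bounded_lifting_of_closed_range:
  fixes S :: "'a::banach \<Rightarrow> 'b::banach"
  assumes S: "bounded_linear S" and "closed (range S)"
  obtains C where "C \<ge> 0" "\<And>x. \<exists>x'. S x' = S x \<and> norm x' \<le> C * norm (S x)"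
proof -
  obtain C where C: "C \<ge> 0"
    "\<And>y e. y \<in> range S \<Longrightarrow> e > 0 \<Longrightarrow> \<exists>x. norm x \<le> C * norm y \<and> norm (y - S x) < e"
    using approximate_lifting_of_closed_range[OF assms] by blast
  have range_diff: "r - S x \<in> range S" if "r \<in> range S" for r x
    using that by (auto simp flip: linear_diff[OF bounded_linear.linear[OF S]])
  have "\<exists>x'. S x' = S x \<and> norm x' \<le> 2 * C * norm (S x)" for x
    using lifting_of_approximate_lifting[OF S range_diff C(1) C(2), of "S x"] by blast
  then show ?thesis using C(1) by (intro that[of "2 * C"]) auto
qed

lemma closed_range_iff_infdist_kernel_le:
  fixes S :: "'a::banach \<Rightarrow> 'b::banach"
  assumes S: "bounded_linear S"
  shows "closed (range S) \<longleftrightarrow> (\<exists>C. \<forall>x. infdist x (S -` {0}) \<le> C * norm (S x))"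
proof -
  have lin: "linear S" using S by (rule bounded_linear.linear)
  show ?thesis
  proof
    assume "closed (range S)"
    then obtain C where C: "\<And>x. \<exists>x'. S x' = S x \<and> norm x' \<le> C * norm (S x)"
      using bounded_lifting_of_closed_range[OF S] by blast
    have "infdist x (S -` {0}) \<le> C * norm (S x)" for x
    proof -
      obtain x' where x': "S x' = S x" "norm x' \<le> C * norm (S x)" using C by blast
      then have "x - x' \<in> S -` {0}" by (simp add: linear_diff[OF lin])
      then have "infdist x (S -` {0}) \<le> dist x (x - x')" by (rule infdist_le)
      with x'(2) show ?thesis by simp
    qed
    then show "\<exists>C. \<forall>x. infdist x (S -` {0}) \<le> C * norm (S x)" by blast
  next
    assume "\<exists>C. \<forall>x. infdist x (S -` {0}) \<le> C * norm (S x)"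
    then obtain C where C: "\<And>x. infdist x (S -` {0}) \<le> C * norm (S x)" by blast
    have "\<exists>x'. S x' = S x \<and> norm x' \<le> (\<bar>C\<bar> + 1) * norm (S x)" for x
    proof (cases "S x = 0")
      case True
      then show ?thesis by (intro exI[of _ 0]) (simp add: linear_0[OF lin])
    next
      case False
      have "C * norm (S x) \<le> \<bar>C\<bar> * norm (S x)" by (simp add: mult_right_mono)
      moreover have "norm (S x) > 0" using False by simp
      ultimately have "infdist x (S -` {0}) < \<bar>C\<bar> * norm (S x) + norm (S x)"
        using C[of x] by linarith
      then have "infdist x (S -` {0}) < (\<bar>C\<bar> + 1) * norm (S x)" by (simp add: distrib_right)
      moreover have "S -` {0} \<noteq> {}" using linear_0[OF lin] by blast
      ultimately obtain k where "S k = 0" "dist x k < (\<bar>C\<bar> + 1) * norm (S x)"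
        by (auto elim: infdist_lessE)
      then show ?thesis
        by (intro exI[of _ "x - k"]) (simp add: linear_diff[OF lin] dist_norm)
    qed
    then show "closed (range S)"
      by (intro closed_range_of_bounded_lifting[OF S, of "\<bar>C\<bar> + 1"]) auto
  qed
qed

section \<open>Generalised kernel and left Drazin invertibility\<close>

definition gen_kernel :: "('a \<Rightarrow> 'a::zero) \<Rightarrow> 'a set" where
  "gen_kernel A = {x. \<exists>n. (A ^^ n) x = 0}"

lemma subspace_gen_kernel:
  fixes A :: "'a::real_vector \<Rightarrow> 'a"
  assumes "linear A"
  shows "subspace (gen_kernel A)"
  unfolding subspace_def gen_kernel_def
proof (intro conjI allI impI ballI; clarsimp)
  show "\<exists>n. (A ^^ n) 0 = 0" by (auto intro: exI[of _ 0])
  fix x y n k assume "(A ^^ n) x = 0" "(A ^^ k) y = 0"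
  then have "(A ^^ (n + k)) x = 0" "(A ^^ (n + k)) y = 0"
    by (auto intro: funpow_eq_0_mono[OF assms])
  then show "\<exists>j. (A ^^ j) (x + y) = 0"
    by (intro exI[of _ "n + k"]) (simp add: linear_add[OF linear_funpow[OF assms]])
next
  fix c x n assume "(A ^^ n) x = 0"
  then show "\<exists>j. (A ^^ j) (c *\<^sub>R x) = 0" by (auto simp: linear_scale[OF linear_funpow[OF assms]])
qed

lemma gen_kernel_eq_kernel:
  fixes A :: "'a::real_vector \<Rightarrow> 'a"
  assumes A: "linear A" and d: "(A ^^ d) -` {0} = (A ^^ Suc d) -` {0}"
  shows "gen_kernel A = (A ^^ d) -` {0}"
proof (intro antisym subsetI)
  have beyond_d: "(A ^^ (d + k)) x = 0 \<Longrightarrow> (A ^^ d) x = 0" for k x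
  proof (induction k arbitrary: x)
    case (Suc k)
    have "(A ^^ Suc d) ((A ^^ k) x) = 0" using Suc.prems by (simp add: funpow_add)
    then have "(A ^^ (d + k)) x = 0" using d by (auto simp: funpow_add set_eq_iff)
    then show ?case by (rule Suc.IH)
  qed simp
  fix x assume "x \<in> gen_kernel A"
  then obtain n where "(A ^^ n) x = 0" by (auto simp: gen_kernel_def)
  then show "x \<in> (A ^^ d) -` {0}"
    using beyond_d[of "n - d" x] funpow_eq_0_mono[OF A, of n x d] by (cases "n \<le> d") auto
qed (auto simp: gen_kernel_def)

lemma gen_kernel_invariant:
  fixes A N :: "'a::real_vector \<Rightarrow> 'a"
  assumes "linear N" "\<And>x. A (N x) = N (A x)"
  shows "N ` gen_kernel A \<subseteq> gen_kernel A"
proof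
  fix y assume "y \<in> N ` gen_kernel A"
  then obtain x n where "y = N x" "(A ^^ n) x = 0" by (auto simp: gen_kernel_def)
  then have "(A ^^ n) y = 0"
    using commute_funpow[of N A, OF assms(2)[symmetric]] linear_0[OF assms(1)] by metis
  then show "y \<in> gen_kernel A" by (auto simp: gen_kernel_def)
qed

lemma kernel_funpow_stable:
  fixes B :: "'a::real_vector \<Rightarrow> 'a"
  assumes "linear B" "gen_kernel B \<subseteq> (B ^^ n) -` {0}"
  shows "(B ^^ n) -` {0} = (B ^^ Suc n) -` {0}"
proof (intro antisym subsetI)
  fix x assume "x \<in> (B ^^ Suc n) -` {0}"
  then have "x \<in> gen_kernel B" by (auto simp: gen_kernel_def simp del: funpow.simps)
  with assms(2) show "x \<in> (B ^^ n) -` {0}" by blast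
qed (use funpow_eq_0_mono[OF assms(1), of n _ "Suc n"] in auto)

text \<open>Peel off one factor: (A + N)^(n+1) x = (A + N)^n (A x) + (A + N)^n (N x), where A x and
  N x are killed by one fewer power of A resp. N.\<close>
lemma funpow_add_commuting_eq_0:
  fixes A N :: "'a::real_vector \<Rightarrow> 'a"
  assumes A: "linear A" and N: "linear N" and comm: "\<And>x. A (N x) = N (A x)"
  shows "(A ^^ k) x = 0 \<Longrightarrow> (N ^^ j) x = 0 \<Longrightarrow> ((\<lambda>x. A x + N x) ^^ (k + j)) x = 0"
proof (induction "k + j" arbitrary: k j x)
  case (Suc n)
  let ?B = "\<lambda>x. A x + N x"
  have B_funpow: "linear (?B ^^ i)" for i by (intro linear_funpow real_vector.linear_compose_add A N)
  show ?case
  proof (cases "k = 0 \<or> j = 0")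
    case True
    then have "x = 0" using Suc.prems by auto
    then show ?thesis by (simp add: linear_0[OF B_funpow])
  next
    case False
    then obtain k' j' where kj: "k = Suc k'" "j = Suc j'" by (metis not0_implies_Suc)
    have "(A ^^ k') (A x) = 0"
      using Suc.prems(1) kj by (simp add: funpow_Suc_right del: funpow.simps)
    moreover have "(N ^^ j) (A x) = 0"
      using Suc.prems(2) commute_funpow[of A N, OF comm] linear_0[OF A] by metis
    moreover have "k' + j = n" using Suc.hyps(2) kj by simp
    ultimately have A_x: "(?B ^^ n) (A x) = 0" using Suc.hyps(1) by blast
    have "(A ^^ k) (N x) = 0"
      using Suc.prems(1) commute_funpow[of N A, OF comm[symmetric]] linear_0[OF N] by metis
    moreover have "(N ^^ j') (N x) = 0"
      using Suc.prems(2) kj by (simp add: funpow_Suc_right del: funpow.simps)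
    moreover have "k + j' = n" using Suc.hyps(2) kj by simp
    ultimately have N_x: "(?B ^^ n) (N x) = 0" using Suc.hyps(1) by blast
    from A_x N_x show ?thesis
      by (simp add: Suc.hyps(2)[symmetric] funpow_Suc_right linear_add[OF B_funpow] del: funpow.simps)
  qed
qed simp

lemma closed_range_funpow_iff_bounded_below_mod:
  fixes A :: "'a::banach \<Rightarrow> 'a"
  assumes A: "bounded_linear A" and d: "(A ^^ d) -` {0} = (A ^^ Suc d) -` {0}"
  shows "closed (range (A ^^ Suc d)) \<longleftrightarrow> bounded_below_mod (gen_kernel A) A"
proof -
  let ?S = "A ^^ Suc d" and ?K = "gen_kernel A"
  have lin: "linear A" using A by (rule bounded_linear.linear)
  have K: "?K = (A ^^ d) -` {0}" "?K = ?S -` {0}"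
    using gen_kernel_eq_kernel[OF lin d] d by simp_all
  have "closed (range ?S) \<longleftrightarrow> (\<exists>C. \<forall>x. infdist x ?K \<le> C * norm (?S x))"
    unfolding K(2) by (rule closed_range_iff_infdist_kernel_le[OF bounded_linear_funpow[OF A]])
  also have "\<dots> \<longleftrightarrow> bounded_below_mod ?K A"
  proof
    assume "\<exists>C. \<forall>x. infdist x ?K \<le> C * norm (?S x)"
    then obtain C where C: "\<And>x. infdist x ?K \<le> C * norm (?S x)" by blast
    obtain M where M: "M > 0" "\<And>z. norm ((A ^^ d) z) \<le> norm z * M"
      using bounded_linear.pos_bounded[OF bounded_linear_funpow[OF A]] by blast
    have pos: "\<bar>C\<bar> * M + 1 > 0"
      using mult_nonneg_nonneg[OF abs_ge_zero[of C], of M] M(1) by linarith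
    have "infdist x ?K / (\<bar>C\<bar> * M + 1) \<le> infdist (A x) ?K" for x
    proof (rule infdist_greatest)
      show "?K \<noteq> {}" using K(1) linear_0[OF linear_funpow[OF lin]] by blast
      fix k assume "k \<in> ?K"
      then have "?S x = (A ^^ d) (A x - k)"
        using K(1) by (simp add: linear_diff[OF linear_funpow[OF lin]] funpow_swap1)
      then have "norm (?S x) \<le> dist (A x) k * M" using M(2) by (simp add: dist_norm)
      have "infdist x ?K \<le> C * norm (?S x)" by (rule C)
      also have "\<dots> \<le> \<bar>C\<bar> * norm (?S x)" by (simp add: mult_right_mono)
      also have "\<dots> \<le> \<bar>C\<bar> * (dist (A x) k * M)"
        using \<open>norm (?S x) \<le> dist (A x) k * M\<close> by (simp add: mult_left_mono)
      also have "\<dots> \<le> dist (A x) k * (\<bar>C\<bar> * M + 1)" by (simp add: algebra_simps)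
      finally show "infdist x ?K / (\<bar>C\<bar> * M + 1) \<le> dist (A x) k"
        by (simp add: pos_divide_le_eq[OF pos])
    qed
    then show "bounded_below_mod ?K A"
      unfolding bounded_below_mod_def using pos
      by (intro exI[of _ "1 / (\<bar>C\<bar> * M + 1)"]) simp
  next
    assume "bounded_below_mod ?K A"
    then obtain c where c: "c > 0" "\<And>x. c * infdist x ?K \<le> infdist (A x) ?K"
      by (auto simp: bounded_below_mod_def)
    have "infdist x ?K \<le> (1 / c ^ Suc d) * norm (?S x)" for x
    proof -
      have "c ^ Suc d * infdist x ?K \<le> infdist (?S x) ?K" by (rule infdist_funpow_ge[OF c])
      also have "\<dots> \<le> norm (?S x)"
        using infdist_le[OF subspace_0[OF subspace_gen_kernel[OF lin]], of "?S x"] by simp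
      finally show ?thesis using c(1) by (simp add: field_simps mult.commute)
    qed
    then show "\<exists>C. \<forall>x. infdist x ?K \<le> C * norm (?S x)" by blast
  qed
  finally show ?thesis .
qed

lemma left_drazin_invertible_iff:
  fixes A :: "'a::banach \<Rightarrow> 'a"
  assumes "bounded_linear A"
  shows "left_drazin_invertible A \<longleftrightarrow>
    (\<exists>n. (A ^^ n) -` {0} = (A ^^ Suc n) -` {0}) \<and> bounded_below_mod (gen_kernel A) A"
proof (cases "\<exists>n. (A ^^ n) -` {0} = (A ^^ Suc n) -` {0}")
  case True
  define d where "d = (LEAST n. (A ^^ n) -` {0} = (A ^^ Suc n) -` {0})"
  have "(A ^^ d) -` {0} = (A ^^ Suc d) -` {0}" unfolding d_def by (rule LeastI_ex[OF True])
  moreover have "ascent A = enat d" using True by (simp add: ascent_def d_def)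
  ultimately show ?thesis
    using True closed_range_funpow_iff_bounded_below_mod[OF assms]
    by (simp add: left_drazin_invertible_def)
next
  case False
  then show ?thesis by (simp add: left_drazin_invertible_def ascent_def)
qed

section \<open>Commuting nilpotent perturbations\<close>

text \<open>A is recovered from A + N by the commuting nilpotent perturbation -N.\<close>
lemma add_commuting_nilpotent_iff:
  fixes A N :: "'a::real_normed_vector \<Rightarrow> 'a"
  assumes P: "\<And>A N. bounded_linear A \<Longrightarrow> bounded_linear N \<Longrightarrow> nilpotent_op N \<Longrightarrow>
      (\<And>x. A (N x) = N (A x)) \<Longrightarrow> P A \<Longrightarrow> P (\<lambda>x. A x + N x)"
    and A: "bounded_linear A" and N: "bounded_linear N" "nilpotent_op N"
    and comm: "\<And>x. A (N x) = N (A x)"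
  shows "P (\<lambda>x. A x + N x) \<longleftrightarrow> P A"
proof
  assume "P (\<lambda>x. A x + N x)"
  moreover have "(\<lambda>x. A (- N x) + N (- N x)) = (\<lambda>x. - N (A x + N x))"
    using comm by (simp add: linear_neg[OF bounded_linear.linear[OF A]]
        linear_neg[OF bounded_linear.linear[OF N(1)]] linear_add[OF bounded_linear.linear[OF N(1)]])
  ultimately have "P (\<lambda>x. (A x + N x) + - N x)"
    using A N by (intro P[of "\<lambda>x. A x + N x" "\<lambda>x. - N x"] bounded_linear_add bounded_linear_minus
        nilpotent_op_uminus bounded_linear.linear) (auto dest: fun_cong)
  then show "P A" by simp
qed (rule P[OF A N comm])

lemma gen_kernel_add_commuting_nilpotent:
  fixes A N :: "'a::real_normed_vector \<Rightarrow> 'a"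
  assumes "bounded_linear A" "bounded_linear N" "nilpotent_op N" "\<And>x. A (N x) = N (A x)"
  shows "gen_kernel (\<lambda>x. A x + N x) = gen_kernel A"
proof -
  have "x \<in> gen_kernel A \<Longrightarrow> x \<in> gen_kernel (\<lambda>x. A x + N x)"
    if hyps: "bounded_linear A" "bounded_linear N" "nilpotent_op N" "\<And>x. A (N x) = N (A x)"
    for A N :: "'a \<Rightarrow> 'a" and x
  proof -
    assume "x \<in> gen_kernel A"
    then obtain k where "(A ^^ k) x = 0" by (auto simp: gen_kernel_def)
    moreover obtain m where "N ^^ m = (\<lambda>x. 0)" using hyps(3) by (auto simp: nilpotent_op_def)
    ultimately have "((\<lambda>x. A x + N x) ^^ (k + m)) x = 0"
      using funpow_add_commuting_eq_0[OF hyps(1,2)[THEN bounded_linear.linear] hyps(4)] by simp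
    then show ?thesis by (auto simp: gen_kernel_def)
  qed
  then show ?thesis
    using add_commuting_nilpotent_iff[where P = "\<lambda>B. x \<in> gen_kernel B" for x, OF _ assms]
    by blast
qed

lemma bounded_below_add_commuting_nilpotent:
  fixes A N :: "'a::real_normed_vector \<Rightarrow> 'a"
  assumes "bounded_linear N" "nilpotent_op N" "\<And>x. A (N x) = N (A x)" "bounded_below A"
  shows "bounded_below (\<lambda>x. A x + N x)"
  using assms linear_0[OF bounded_linear.linear[OF assms(1)]]
  by (simp add: bounded_below_iff_bounded_below_mod_0 bounded_below_mod_add_commuting_nilpotent)

lemma left_drazin_invertible_add_commuting_nilpotent:
  fixes A N :: "'a::banach \<Rightarrow> 'a"
  assumes A: "bounded_linear A" and N: "bounded_linear N" "nilpotent_op N"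
    and comm: "\<And>x. A (N x) = N (A x)" and "left_drazin_invertible A"
  shows "left_drazin_invertible (\<lambda>x. A x + N x)"
proof -
  let ?B = "\<lambda>x. A x + N x"
  have lin: "linear A" "linear N" "linear ?B"
    using A N by (simp_all add: bounded_linear.linear bounded_linear_add)
  obtain d where d: "(A ^^ d) -` {0} = (A ^^ Suc d) -` {0}"
    and below: "bounded_below_mod (gen_kernel A) A"
    using assms left_drazin_invertible_iff[OF A] by blast
  obtain m where m: "N ^^ m = (\<lambda>x. 0)" using N(2) by (auto simp: nilpotent_op_def)
  have same_kernel: "gen_kernel ?B = gen_kernel A"
    using gen_kernel_add_commuting_nilpotent[OF A N comm] .
  have "gen_kernel ?B \<subseteq> (?B ^^ (d + m)) -` {0}"
    unfolding same_kernel gen_kernel_eq_kernel[OF lin(1) d]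
    using funpow_add_commuting_eq_0[OF lin(1,2) comm] m by auto
  then have "(?B ^^ (d + m)) -` {0} = (?B ^^ Suc (d + m)) -` {0}"
    by (rule kernel_funpow_stable[OF lin(3)])
  moreover have "bounded_below_mod (gen_kernel ?B) ?B"
    unfolding same_kernel using N comm below
    by (intro bounded_below_mod_add_commuting_nilpotent subspace_gen_kernel gen_kernel_invariant lin)
  ultimately show ?thesis
    using left_drazin_invertible_iff[OF bounded_linear_add[OF A N(1)]] by blast
qed

lemma bounded_below_add_commuting_nilpotent_iff:
  fixes A N :: "'a::real_normed_vector \<Rightarrow> 'a"
  assumes "bounded_linear A" "bounded_linear N" "nilpotent_op N" "\<And>x. A (N x) = N (A x)"
  shows "bounded_below (\<lambda>x. A x + N x) \<longleftrightarrow> bounded_below A"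
proof (rule add_commuting_nilpotent_iff[where P = bounded_below, OF _ assms])
  fix A N :: "'a \<Rightarrow> 'a"
  assume hyps: "bounded_linear N" "nilpotent_op N" "\<And>x. A (N x) = N (A x)" "bounded_below A"
  show "bounded_below (\<lambda>x. A x + N x)" by (rule bounded_below_add_commuting_nilpotent[OF hyps])
qed

lemma left_drazin_invertible_add_commuting_nilpotent_iff:
  fixes A N :: "'a::banach \<Rightarrow> 'a"
  assumes "bounded_linear A" "bounded_linear N" "nilpotent_op N" "\<And>x. A (N x) = N (A x)"
  shows "left_drazin_invertible (\<lambda>x. A x + N x) \<longleftrightarrow> left_drazin_invertible A"
proof (rule add_commuting_nilpotent_iff[where P = left_drazin_invertible, OF _ assms])
  fix A N :: "'a \<Rightarrow> 'a"
  assume hyps: "bounded_linear A" "bounded_linear N" "nilpotent_op N" "\<And>x. A (N x) = N (A x)"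
    "left_drazin_invertible A"
  show "left_drazin_invertible (\<lambda>x. A x + N x)"
    by (rule left_drazin_invertible_add_commuting_nilpotent[OF hyps])
qed

lemma bounded_linear_complex_scalar:
  assumes "complex_scalar sc"
  shows "bounded_linear (sc a)"
proof (rule bounded_linear_intro[where K = "cmod a"])
  have sc: "\<And>r x. sc (complex_of_real r) x = r *\<^sub>R x" "\<And>a b x. sc (a * b) x = sc a (sc b x)"
    using assms by (simp_all add: complex_scalar_def)
  show "sc a (x + y) = sc a x + sc a y" for x y
    using assms by (simp add: complex_scalar_def)
  show "sc a (r *\<^sub>R x) = r *\<^sub>R sc a x" for r x
    using sc(2)[of a "complex_of_real r" x] sc(2)[of "complex_of_real r" a x] sc(1)
    by (simp add: mult.commute)
  show "norm (sc a x) \<le> norm x * cmod a" for x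
    using assms by (simp add: complex_scalar_def mult.commute)
qed

theorem corollary3p9:
  fixes sc :: "complex \<Rightarrow> 'a::banach \<Rightarrow> 'a"
    and T N :: "'a \<Rightarrow> 'a"
  assumes "complex_scalar sc"
    and "infinite_dimensional TYPE('a)"
    and "bounded_op sc T"
    and "bounded_op sc N"
    and "nilpotent_op N"
    and "T \<circ> N = N \<circ> T"
  shows "left_poles sc (\<lambda>x. T x + N x) = left_poles sc T"
proof -
  have T: "bounded_linear T" and N: "bounded_linear N" "\<And>a x. N (sc a x) = sc a (N x)"
    using assms(3,4) by (auto simp: bounded_op_def)
  have "l \<in> left_poles sc (\<lambda>x. T x + N x) \<longleftrightarrow> l \<in> left_poles sc T" for l
  proof -
    let ?A = "\<lambda>x. T x - sc l x"
    have A: "bounded_linear ?A"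
      by (intro bounded_linear_sub T bounded_linear_complex_scalar assms(1))
    have comm: "?A (N x) = N (?A x)" for x
      using fun_cong[OF assms(6), of x] N(2) by (simp add: linear_diff[OF bounded_linear.linear[OF N(1)]])
    have below: "bounded_below (\<lambda>x. ?A x + N x) \<longleftrightarrow> bounded_below ?A"
      using A N(1) assms(5) comm by (rule bounded_below_add_commuting_nilpotent_iff)
    have drazin: "left_drazin_invertible (\<lambda>x. ?A x + N x) \<longleftrightarrow> left_drazin_invertible ?A"
      using A N(1) assms(5) comm by (rule left_drazin_invertible_add_commuting_nilpotent_iff)
    have "(\<lambda>x. T x + N x - sc l x) = (\<lambda>x. ?A x + N x)" by (simp add: algebra_simps)
    with below drazin show ?thesis by (simp add: left_poles_def approx_point_spectrum_def)
  qed
  then show ?thesis by blast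
qed

end
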